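(* Let $\varphi\in\mathrm{End}_K(P_n)$. Then the following are equivalent: (1) $\varphi\in\mathbb{S}_n$; (2) $[x_i,\varphi]\in\mathfrak{p}_i$ for all $i=1,\dots,n$; (3) for each $i=1,\dots,n$ there exist $a_i,b_i\in\mathfrak{p}_i$ with $x_i\varphi=\varphi(x_i+a_i)+b_i$.
   Context: $K$ is a field of characteristic zero. $\mathbb{S}_n$ is the $K$-algebra generated by $x_1,\dots,x_n,y_1,\dots,y_n$ with defining relations $y_ix_i=1$ and $[x_i,y_j]=[x_i,x_j]=[y_i,y_j]=0$ for $i\ne j$. $\mathbb{S}_n$ acts faithfully on $P_n=K[x_1,\dots,x_n]$ by $x_i*x^\alpha=x^{\alpha+e_i}$, $y_i*x^\alpha=x^{\alpha-e_i}$ if $\alpha_i>0$ and $0$ otherwise; thus $\mathbb{S}_n\subset\mathrm{End}_K(P_n)$ and all products/commutators are taken in $\mathrm{End}_K(P_n)$. For $k,l\in\mathbb{N}$, $E_{kl}(i):=x_i^ky_i^l-x_i^{k+1}y_i^{l+1}$, $F(i)=\bigoplus_{k,l}KE_{kl}(i)$, and $\mathfrak{p}_i:=F(i)\otimes\bigotimes_{j\ne i}\mathbb{S}_1(j)\subset\mathbb{S}_n=\bigotimes_j\mathbb{S}_1(j)$ (the ideal generated by $1-x_iy_i$). *)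

theory Defs
  imports "HOL-Library.Poly_Mapping"
begin

text \<open>P_n = K[x_i : i in 'i] as finitely supported maps from exponent vectors
  ('i =>0 nat) to the field 'k.  The index type 'i is finite (n = CARD('i)).\<close>

type_synonym ('i, 'k) pol = "('i \<Rightarrow>\<^sub>0 nat) \<Rightarrow>\<^sub>0 'k"

type_synonym ('i, 'k) endo = "('i, 'k) pol \<Rightarrow> ('i, 'k) pol"

definition smult_pol :: "'k::field \<Rightarrow> ('i, 'k) pol \<Rightarrow> ('i, 'k) pol" where
  "smult_pol c p = Poly_Mapping.map (\<lambda>a. c * a) p"

definition klinear :: "('i, 'k::field) endo \<Rightarrow> bool" where
  "klinear \<phi> \<longleftrightarrow> (\<forall>p q. \<phi> (p + q) = \<phi> p + \<phi> q) \<and> (\<forall>c p. \<phi> (smult_pol c p) = smult_pol c (\<phi> p))"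

text \<open>The operators x_i (multiplication by x_i) and y_i (x^a |-> x^(a-e_i) if a_i>0, else 0).\<close>
definition xop :: "'i \<Rightarrow> ('i, 'k::field) endo" where
  "xop i p = Poly_Mapping.single (Poly_Mapping.single i 1) 1 * p"

definition yop :: "'i \<Rightarrow> ('i, 'k::field) endo" where
  "yop i p = Poly_Mapping.map_key (\<lambda>\<alpha>. \<alpha> + Poly_Mapping.single i (1::nat)) p"

definition eadd :: "('i, 'k::field) endo \<Rightarrow> ('i, 'k) endo \<Rightarrow> ('i, 'k) endo" where
  "eadd f g = (\<lambda>p. f p + g p)"

definition esub :: "('i, 'k::field) endo \<Rightarrow> ('i, 'k) endo \<Rightarrow> ('i, 'k) endo" where
  "esub f g = (\<lambda>p. f p - g p)"

definition escal :: "'k::field \<Rightarrow> ('i, 'k) endo \<Rightarrow> ('i, 'k) endo" where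
  "escal c f = (\<lambda>p. smult_pol c (f p))"

definition comm :: "('i, 'k::field) endo \<Rightarrow> ('i, 'k) endo \<Rightarrow> ('i, 'k) endo" where
  "comm f g = esub (f \<circ> g) (g \<circ> f)"

text \<open>For J = UNIV this is S_n; for J = {j} it is S_1(j); for J = UNIV - {i} it is
  the tensor product of the S_1(j), j ~= i, inside End_K(P_n).\<close>
inductive_set alg_gen :: "'i set \<Rightarrow> ('i, 'k::field) endo set" for J where
  gen_x: "j \<in> J \<Longrightarrow> xop j \<in> alg_gen J"
| gen_y: "j \<in> J \<Longrightarrow> yop j \<in> alg_gen J"
| gen_scal: "(\<lambda>p. smult_pol c p) \<in> alg_gen J"
| gen_add: "f \<in> alg_gen J \<Longrightarrow> g \<in> alg_gen J \<Longrightarrow> eadd f g \<in> alg_gen J"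
| gen_comp: "f \<in> alg_gen J \<Longrightarrow> g \<in> alg_gen J \<Longrightarrow> f \<circ> g \<in> alg_gen J"

abbreviation Sn :: "('i, 'k::field) endo set" where
  "Sn \<equiv> alg_gen UNIV"

inductive_set espan :: "('i, 'k::field) endo set \<Rightarrow> ('i, 'k) endo set" for A where
  span_zero: "(\<lambda>p. 0) \<in> espan A"
| span_base: "f \<in> A \<Longrightarrow> f \<in> espan A"
| span_add: "f \<in> espan A \<Longrightarrow> g \<in> espan A \<Longrightarrow> eadd f g \<in> espan A"
| span_scal: "f \<in> espan A \<Longrightarrow> escal c f \<in> espan A"

definition Ekl :: "nat \<Rightarrow> nat \<Rightarrow> 'i \<Rightarrow> ('i, 'k::field) endo" where
  "Ekl k l i = esub (xop i ^^ k \<circ> yop i ^^ l) (xop i ^^ (k+1) \<circ> yop i ^^ (l+1))"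

text \<open>p_i = F(i) \<otimes> \<otimes>_{j ~= i} S_1(j), realised inside End_K(P_n) as the span of
  the products E_kl(i) u with u in the algebra generated by x_j, y_j (j ~= i).\<close>
definition pid :: "'i \<Rightarrow> ('i, 'k::field) endo set" where
  "pid i = espan {Ekl k l i \<circ> u | k l u. u \<in> alg_gen (UNIV - {i})}"

end

theory Submission
  imports Defs "HOL-Library.FuncSet"
begin

(* (1) => (2): p_i is a two-sided ideal of S_n, and [x_i, _] is a derivation that sends
   the generators x_j, y_j and the scalars into p_i (the only nonzero value is
   [x_i, y_i] = -E_00(i)).  (2) => (3) is trivial (a_i = 0, b_i = [x_i, phi]).
   (3) => (1) is the substance.  Every element of p_i annihilates x_i^m P_n for m large,
   so (3) forces phi(x^(alpha + e_i)) = x_i phi(x^alpha) as soon as alpha_i >= N.  Hence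
   phi(x^alpha) = x^(alpha - trunc alpha) phi(x^(trunc alpha)), where trunc caps every
   exponent at N.  The operators  T_beta : x^alpha |-> [trunc alpha = beta] x^(alpha - beta)
   are products of E_0l(i) and y_i^N, so they lie in S_n, and
   phi = sum over the finitely many beta with entries <= N of phi(x^beta) * T_beta. *)

abbreviation monom :: "('i \<Rightarrow>\<^sub>0 nat) \<Rightarrow> ('i, 'k::field) pol" where
  "monom \<alpha> \<equiv> Poly_Mapping.single \<alpha> 1"

abbreviation unit_exp :: "'i \<Rightarrow> 'i \<Rightarrow>\<^sub>0 nat" where
  "unit_exp i \<equiv> Poly_Mapping.single i 1"

lemma smult_pol_conv: "smult_pol c p = Poly_Mapping.single 0 c * p"
  unfolding smult_pol_def by (metis mult_map_scale_conv_mult)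

lemma smult_pol_single: "smult_pol c (Poly_Mapping.single \<alpha> d) = Poly_Mapping.single \<alpha> (c * d)"
  unfolding smult_pol_def by simp

lemma smult_pol_add: "smult_pol c (p + q) = smult_pol c p + smult_pol c q"
  by (simp add: smult_pol_conv distrib_left)

lemma smult_pol_commute: "smult_pol c (smult_pol d p) = smult_pol d (smult_pol c p)"
  by (simp add: smult_pol_conv mult.left_commute)

lemma smult_pol_one: "smult_pol 1 = (\<lambda>p. p)"
  by (rule ext) (simp add: smult_pol_conv)

lemma smult_pol_zero: "smult_pol 0 = (\<lambda>p. 0)"
  by (rule ext) (simp add: smult_pol_conv)

lemma smult_pol_neg1: "smult_pol (-1) q = - q"
  by (simp add: smult_pol_conv single_uminus)

lemma inj_shift: "inj (\<lambda>\<alpha>::'i \<Rightarrow>\<^sub>0 nat. \<alpha> + unit_exp i)"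
  by (rule injI) simp

lemma lookup_yop: "Poly_Mapping.lookup (yop i p) \<beta> = Poly_Mapping.lookup p (\<beta> + unit_exp i)"
  unfolding yop_def map_key.rep_eq[OF inj_shift] by simp

lemma xop_single: "xop i (Poly_Mapping.single \<alpha> c) = Poly_Mapping.single (\<alpha> + unit_exp i) c"
  unfolding xop_def by (simp add: mult_single add.commute)

lemma yop_single: "yop i (Poly_Mapping.single \<alpha> c) =
   (if 0 < Poly_Mapping.lookup \<alpha> i then Poly_Mapping.single (\<alpha> - unit_exp i) c else 0)"
proof (rule poly_mapping_eqI)
  fix \<beta>
  have "(\<alpha> = \<beta> + unit_exp i) \<longleftrightarrow> 0 < Poly_Mapping.lookup \<alpha> i \<and> \<alpha> - unit_exp i = \<beta>"
    by (auto simp: poly_mapping_eq_iff fun_eq_iff lookup_add lookup_minus lookup_single when_def)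
  then show "Poly_Mapping.lookup (yop i (Poly_Mapping.single \<alpha> c)) \<beta> =
      Poly_Mapping.lookup (if 0 < Poly_Mapping.lookup \<alpha> i
        then Poly_Mapping.single (\<alpha> - unit_exp i) c else 0) \<beta>"
    by (auto simp: lookup_yop lookup_single when_def)
qed

lemma pol_expand: "p = (\<Sum>\<alpha>\<in>Poly_Mapping.keys p. Poly_Mapping.single \<alpha> (Poly_Mapping.lookup p \<alpha>))"
proof (rule poly_mapping_eqI)
  fix \<beta>
  have "(\<Sum>\<alpha>\<in>Poly_Mapping.keys p. Poly_Mapping.lookup (Poly_Mapping.single \<alpha> (Poly_Mapping.lookup p \<alpha>)) \<beta>)
      = (\<Sum>\<alpha>\<in>Poly_Mapping.keys p. if \<alpha> = \<beta> then Poly_Mapping.lookup p \<alpha> else 0)"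
    by (rule sum.cong) (auto simp: lookup_single when_def)
  also have "\<dots> = Poly_Mapping.lookup p \<beta>" by (simp add: in_keys_iff)
  finally show "Poly_Mapping.lookup p \<beta> =
      Poly_Mapping.lookup (\<Sum>\<alpha>\<in>Poly_Mapping.keys p. Poly_Mapping.single \<alpha> (Poly_Mapping.lookup p \<alpha>)) \<beta>"
    by (simp add: lookup_sum)
qed

lemma exponent_induct [case_names zero step]:
  fixes \<alpha> :: "'i::finite \<Rightarrow>\<^sub>0 nat"
  assumes "P 0" "\<And>\<alpha> i. P \<alpha> \<Longrightarrow> P (\<alpha> + unit_exp i)"
  shows "P \<alpha>"
proof -
  have "P \<alpha>" if "(\<Sum>i\<in>UNIV. Poly_Mapping.lookup \<alpha> i) = n" for n \<alpha>
    using that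
  proof (induction n arbitrary: \<alpha>)
    case 0
    then have "\<alpha> = 0" by (auto intro!: poly_mapping_eqI)
    then show ?case using assms(1) by simp
  next
    case (Suc n)
    then obtain i where i: "0 < Poly_Mapping.lookup \<alpha> i"
      by (metis gr0I sum.neutral Zero_not_Suc)
    define \<alpha>' where "\<alpha>' = \<alpha> - unit_exp i"
    have \<alpha>: "\<alpha> = \<alpha>' + unit_exp i"
      using i unfolding \<alpha>'_def
      by (auto simp: poly_mapping_eq_iff fun_eq_iff lookup_add lookup_minus lookup_single when_def)
    have "(\<Sum>j\<in>UNIV. Poly_Mapping.lookup (unit_exp i) j) = 1"
      by (simp add: lookup_single when_def)
    then have "(\<Sum>j\<in>UNIV. Poly_Mapping.lookup \<alpha> j) = (\<Sum>j\<in>UNIV. Poly_Mapping.lookup \<alpha>' j) + 1"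
      by (subst \<alpha>) (simp add: lookup_add sum.distrib)
    then have "P \<alpha>'" using Suc by simp
    then show ?case using \<alpha> assms(2) by metis
  qed
  then show ?thesis by blast
qed

lemma finite_bounded_exponents: "finite {\<beta> :: 'i::finite \<Rightarrow>\<^sub>0 nat. \<forall>i. Poly_Mapping.lookup \<beta> i \<le> N}"
proof -
  have "{\<beta> :: 'i \<Rightarrow>\<^sub>0 nat. \<forall>i. Poly_Mapping.lookup \<beta> i \<le> N} \<subseteq> Abs_poly_mapping ` PiE UNIV (\<lambda>_. {..N})"
  proof
    fix \<beta> :: "'i \<Rightarrow>\<^sub>0 nat" assume "\<beta> \<in> {\<beta>. \<forall>i. Poly_Mapping.lookup \<beta> i \<le> N}"
    then have "Poly_Mapping.lookup \<beta> \<in> PiE UNIV (\<lambda>_. {..N})" by (auto simp: PiE_UNIV_domain)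
    then show "\<beta> \<in> Abs_poly_mapping ` PiE UNIV (\<lambda>_. {..N})"
      by (metis image_eqI lookup_inverse)
  qed
  moreover have "finite (PiE (UNIV :: 'i set) (\<lambda>_. {..N}))" by (rule finite_PiE) auto
  ultimately show ?thesis by (meson finite_imageI finite_subset)
qed

lemma klinearI: "(\<And>p q. f (p + q) = f p + f q) \<Longrightarrow> (\<And>c p. f (smult_pol c p) = smult_pol c (f p)) \<Longrightarrow> klinear f"
  unfolding klinear_def by blast

lemma klinear_add: "klinear f \<Longrightarrow> f (p + q) = f p + f q"
  unfolding klinear_def by blast

lemma klinear_smult: "klinear f \<Longrightarrow> f (smult_pol c p) = smult_pol c (f p)"
  unfolding klinear_def by blast

lemma klinear_zero: "klinear f \<Longrightarrow> f 0 = 0"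
  by (metis add_cancel_right_right add_0 klinear_add)

lemma klinear_diff: "klinear f \<Longrightarrow> f (p - q) = f p - f q"
  by (metis add_diff_cancel klinear_add diff_add_cancel)

lemma klinear_sum: "klinear f \<Longrightarrow> f (sum g A) = (\<Sum>a\<in>A. f (g a))"
  by (induction A rule: infinite_finite_induct) (auto simp: klinear_zero klinear_add)

lemma klinear_eq_on_monoms:
  assumes "klinear f" "klinear g" "\<And>\<alpha>. f (monom \<alpha>) = g (monom \<alpha>)"
  shows "f = g"
proof
  fix p
  have term_eq: "f (Poly_Mapping.single \<alpha> c) = g (Poly_Mapping.single \<alpha> c)" for \<alpha> c
    using assms klinear_smult smult_pol_single[of c \<alpha> 1] by (metis mult_1_right)
  have "f p = (\<Sum>\<alpha>\<in>Poly_Mapping.keys p. f (Poly_Mapping.single \<alpha> (Poly_Mapping.lookup p \<alpha>)))"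
    by (subst pol_expand) (simp add: klinear_sum assms(1))
  also have "\<dots> = (\<Sum>\<alpha>\<in>Poly_Mapping.keys p. g (Poly_Mapping.single \<alpha> (Poly_Mapping.lookup p \<alpha>)))"
    by (simp add: term_eq)
  also have "\<dots> = g p"
    by (subst (2) pol_expand) (simp add: klinear_sum assms(2))
  finally show "f p = g p" .
qed

lemma klinear_xop: "klinear (xop i)"
  by (rule klinearI) (simp_all add: xop_def smult_pol_conv distrib_left mult.left_commute)

lemma klinear_yop: "klinear (yop i)"
  by (rule klinearI) (unfold yop_def smult_pol_def, rule map_key_plus[OF inj_shift], rule map_key_map[OF inj_shift])

lemma klinear_scal: "klinear (\<lambda>p. smult_pol c p)"
  by (rule klinearI) (simp_all add: smult_pol_conv distrib_left mult.left_commute)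

lemma klinear_comp: "klinear f \<Longrightarrow> klinear g \<Longrightarrow> klinear (f \<circ> g)"
  by (rule klinearI) (simp_all add: klinear_add klinear_smult)

lemma klinear_eadd: "klinear f \<Longrightarrow> klinear g \<Longrightarrow> klinear (eadd f g)"
  by (rule klinearI) (simp_all add: eadd_def klinear_add klinear_smult smult_pol_add add_ac)

lemma klinear_escal: "klinear f \<Longrightarrow> klinear (escal c f)"
  by (rule klinearI) (simp_all add: escal_def klinear_add klinear_smult smult_pol_add smult_pol_commute)

lemma alg_gen_klinear: "f \<in> alg_gen J \<Longrightarrow> klinear f"
  by (induction rule: alg_gen.induct)
    (simp_all add: klinear_xop klinear_yop klinear_scal klinear_eadd klinear_comp[unfolded comp_def])

lemma yop_xop: "yop i (xop i p) = p"
proof -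
  have "yop i \<circ> xop i = id"
    by (rule klinear_eq_on_monoms)
      (simp_all add: klinear_comp klinear_xop klinear_yop klinearI yop_single xop_single lookup_add)
  then show ?thesis by (metis comp_apply id_apply)
qed

lemma xop_yop_single: "0 < Poly_Mapping.lookup \<delta> i \<Longrightarrow> xop i (yop i (Poly_Mapping.single \<delta> c)) = Poly_Mapping.single \<delta> c"
proof -
  assume "0 < Poly_Mapping.lookup \<delta> i"
  moreover have "0 < Poly_Mapping.lookup \<delta> i \<Longrightarrow> \<delta> - unit_exp i + unit_exp i = \<delta>"
    by (auto simp: poly_mapping_eq_iff fun_eq_iff lookup_add lookup_minus lookup_single when_def)
  ultimately show ?thesis by (simp add: yop_single xop_single)
qed

lemma xop_pow_single: "(xop i ^^ m) (Poly_Mapping.single \<gamma> c) = Poly_Mapping.single (\<gamma> + Poly_Mapping.single i m) c"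
  by (induction m) (simp_all add: xop_single add.assoc single_add[symmetric])

lemma yop_pow_single: "(yop i ^^ m) (Poly_Mapping.single \<gamma> c) =
   (if m \<le> Poly_Mapping.lookup \<gamma> i then Poly_Mapping.single (\<gamma> - Poly_Mapping.single i m) c else 0)"
proof (induction m)
  case (Suc m)
  have "\<gamma> - Poly_Mapping.single i m - unit_exp i = \<gamma> - Poly_Mapping.single i (Suc m)"
    by (auto simp: poly_mapping_eq_iff fun_eq_iff lookup_minus lookup_single when_def)
  with Suc show ?case
    by (auto simp: yop_single lookup_minus klinear_zero[OF klinear_yop])
qed simp

lemma xop_commute: "xop i \<circ> xop j = xop j \<circ> xop i"
  by (rule ext) (simp add: xop_def mult.left_commute)

lemma yop_commute: "yop i \<circ> yop j = yop j \<circ> yop i"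
  by (rule ext, rule poly_mapping_eqI) (simp add: lookup_yop add_ac)

lemma xop_yop_commute: "i \<noteq> j \<Longrightarrow> xop i \<circ> yop j = yop j \<circ> xop i"
proof (rule klinear_eq_on_monoms)
  fix \<alpha> :: "'a \<Rightarrow>\<^sub>0 nat"
  assume "i \<noteq> j"
  then have "\<alpha> - unit_exp j + unit_exp i = \<alpha> + unit_exp i - unit_exp j"
    by (auto simp: poly_mapping_eq_iff fun_eq_iff lookup_add lookup_minus lookup_single when_def)
  with \<open>i \<noteq> j\<close> show "(xop i \<circ> yop j) (monom \<alpha>) = (yop j \<circ> xop i) (monom \<alpha>)"
    by (simp add: yop_single xop_single lookup_add lookup_single klinear_zero[OF klinear_xop])
qed (simp_all add: klinear_comp klinear_xop klinear_yop)

lemma alg_gen_centralizer: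
  assumes "klinear w" "\<And>j. j \<in> J \<Longrightarrow> w \<circ> xop j = xop j \<circ> w \<and> w \<circ> yop j = yop j \<circ> w"
    and "u \<in> alg_gen J"
  shows "w \<circ> u = u \<circ> w"
  using assms(3)
proof (induction rule: alg_gen.induct)
  case (gen_scal c) show ?case by (rule ext) (simp add: klinear_smult[OF assms(1)])
next
  case (gen_add f g) then show ?case
    by (simp add: fun_eq_iff eadd_def klinear_add[OF assms(1)])
next
  case (gen_comp f g) then show ?case by (metis comp_assoc)
qed (use assms(2) in auto)

lemma alg_gen_disjoint_commute:
  assumes "I \<inter> J = {}" "u \<in> alg_gen I" "v \<in> alg_gen J"
  shows "u \<circ> v = v \<circ> u"
proof -
  have gens_commute: "g \<circ> u = u \<circ> g" if "g = xop j \<or> g = yop j" "j \<in> J" for g j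
  proof (rule alg_gen_centralizer[OF _ _ assms(2)])
    show "klinear g" using that by (metis klinear_xop klinear_yop)
    fix i assume "i \<in> I"
    with that assms(1) have "i \<noteq> j" by blast
    with that show "g \<circ> xop i = xop i \<circ> g \<and> g \<circ> yop i = yop i \<circ> g"
      by (metis xop_commute yop_commute xop_yop_commute)
  qed
  show ?thesis
    by (rule alg_gen_centralizer[OF alg_gen_klinear[OF assms(2)] _ assms(3)])
      (metis gens_commute)
qed

lemma alg_gen_id: "(\<lambda>p. p) \<in> alg_gen J"
  using alg_gen.gen_scal[of 1 J] by (simp add: smult_pol_one)

lemma alg_gen_zero: "(\<lambda>p. 0) \<in> alg_gen J"
  using alg_gen.gen_scal[of 0 J] by (simp add: smult_pol_zero)

lemma alg_gen_esub: "f \<in> alg_gen J \<Longrightarrow> g \<in> alg_gen J \<Longrightarrow> esub f g \<in> alg_gen J"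
proof -
  assume "f \<in> alg_gen J" "g \<in> alg_gen J"
  moreover have "esub f g = eadd f ((\<lambda>p. smult_pol (-1) p) \<circ> g)"
    by (rule ext) (simp add: esub_def eadd_def smult_pol_neg1)
  ultimately show ?thesis by (simp add: alg_gen.intros)
qed

lemma alg_gen_funpow: "f \<in> alg_gen J \<Longrightarrow> f ^^ n \<in> alg_gen J"
  by (induction n) (simp_all add: alg_gen.gen_comp alg_gen_id[unfolded id_def[symmetric]])

lemma alg_gen_sum:
  "finite A \<Longrightarrow> (\<And>a. a \<in> A \<Longrightarrow> f a \<in> alg_gen J) \<Longrightarrow> (\<lambda>p. \<Sum>a\<in>A. f a p) \<in> alg_gen J"
proof (induction A rule: finite_induct)
  case (insert a A)
  then have "eadd (f a) (\<lambda>p. \<Sum>a\<in>A. f a p) \<in> alg_gen J" by (simp add: alg_gen.gen_add)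
  with insert.hyps show ?case by (simp add: eadd_def)
qed (simp add: alg_gen_zero)

lemma Ekl_alg_gen: "i \<in> J \<Longrightarrow> Ekl k l i \<in> alg_gen J"
  unfolding Ekl_def by (intro alg_gen_esub alg_gen.gen_comp alg_gen_funpow alg_gen.intros)

lemma monom_mult_Sn: "(\<lambda>p. monom \<alpha> * p) \<in> (Sn :: ('i::finite, 'k::field) endo set)"
proof (induction \<alpha> rule: exponent_induct)
  case zero
  show ?case using alg_gen_id by simp
next
  case (step \<alpha> i)
  have "(\<lambda>p. monom (\<alpha> + unit_exp i) * p) = xop i \<circ> (\<lambda>p. (monom \<alpha> :: ('i, 'k) pol) * p)"
    by (rule ext) (simp add: xop_def mult.assoc[symmetric] mult_single add.commute)
  also have "\<dots> \<in> Sn" using step by (simp add: alg_gen.gen_comp alg_gen.gen_x)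
  finally show ?case .
qed

lemma mult_Sn: "(\<lambda>p. q * p) \<in> (Sn :: ('i::finite, 'k::field) endo set)"
proof -
  have "(\<lambda>p. q * p) = (\<lambda>p. \<Sum>\<alpha>\<in>Poly_Mapping.keys q.
      ((\<lambda>p. smult_pol (Poly_Mapping.lookup q \<alpha>) p) \<circ> (\<lambda>p. monom \<alpha> * p)) p)"
  proof
    fix p
    have "q * p = (\<Sum>\<alpha>\<in>Poly_Mapping.keys q. Poly_Mapping.single \<alpha> (Poly_Mapping.lookup q \<alpha>)) * p"
      by (subst pol_expand[of q]) simp
    then show "q * p = (\<Sum>\<alpha>\<in>Poly_Mapping.keys q.
        ((\<lambda>p. smult_pol (Poly_Mapping.lookup q \<alpha>) p) \<circ> (\<lambda>p. monom \<alpha> * p)) p)"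
      by (simp add: sum_distrib_right smult_pol_conv mult.assoc[symmetric] mult_single)
  qed
  also have "\<dots> \<in> Sn" by (intro alg_gen_sum finite_keys alg_gen.gen_comp alg_gen.gen_scal monom_mult_Sn)
  finally show ?thesis .
qed

lemma Ekl_xop_left: "xop i \<circ> Ekl k l i = Ekl (Suc k) l i"
  by (rule ext) (simp add: Ekl_def esub_def klinear_diff[OF klinear_xop])

lemma Ekl_yop_left: "yop i \<circ> Ekl (Suc k) l i = Ekl k l i"
  by (rule ext) (simp add: Ekl_def esub_def klinear_diff[OF klinear_yop] yop_xop)

lemma Ekl_yop_left_0: "yop i \<circ> Ekl 0 l i = (\<lambda>p. 0)"
  by (rule ext) (simp add: Ekl_def esub_def klinear_diff[OF klinear_yop] yop_xop)

lemma Ekl_yop_right: "Ekl k l i \<circ> yop i = Ekl k (Suc l) i"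
  by (rule ext) (simp add: Ekl_def esub_def funpow_swap1[symmetric])

lemma yop_pow_xop: "(yop i ^^ Suc l) (xop i p) = (yop i ^^ l) p"
  by (simp only: funpow_Suc_right comp_apply yop_xop)

lemma Ekl_xop_right_apply: "Ekl k (Suc l) i (xop i p) = Ekl k l i p"
  unfolding Ekl_def esub_def comp_apply by (simp only: yop_pow_xop add_Suc)

lemma Ekl_xop_right_0_apply: "Ekl k 0 i (xop i p) = 0"
  by (simp add: Ekl_def esub_def yop_xop funpow_swap1)

lemma Ekl_xop_right: "Ekl k (Suc l) i \<circ> xop i = Ekl k l i"
  by (rule ext) (simp add: Ekl_xop_right_apply)

lemma Ekl_xop_right_0: "Ekl k 0 i \<circ> xop i = (\<lambda>p. 0)"
  by (rule ext) (simp add: Ekl_xop_right_0_apply)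

lemma Ekl_vanish: "l < m \<Longrightarrow> Ekl k l i ((xop i ^^ m) p) = 0"
proof (induction l arbitrary: m)
  case 0
  then obtain m' where "m = Suc m'" by (cases m) auto
  then show ?case by (simp add: Ekl_xop_right_0_apply)
next
  case (Suc l)
  then obtain m' where "m = Suc m'" "l < m'" by (cases m) auto
  with Suc.IH show ?case by (simp add: Ekl_xop_right_apply)
qed

lemma Ekl_0_single: "Ekl 0 l i (monom \<gamma> :: ('i, 'k::field) pol) =
   (if Poly_Mapping.lookup \<gamma> i = l then monom (\<gamma> - Poly_Mapping.single i l) else 0)"
proof -
  have "Ekl 0 l i (monom \<gamma> :: ('i, 'k) pol) = (yop i ^^ l) (monom \<gamma>) - xop i (yop i ((yop i ^^ l) (monom \<gamma>)))"
    by (simp add: Ekl_def esub_def)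
  also have "\<dots> = (if Poly_Mapping.lookup \<gamma> i = l then monom (\<gamma> - Poly_Mapping.single i l) else 0)"
  proof (cases "Poly_Mapping.lookup \<gamma> i" l rule: linorder_cases)
    case less then show ?thesis
      by (simp add: yop_pow_single klinear_zero[OF klinear_xop] klinear_zero[OF klinear_yop])
  next
    case equal then show ?thesis
      by (simp add: yop_pow_single yop_single lookup_minus klinear_zero[OF klinear_xop])
  next
    case greater
    then have "0 < Poly_Mapping.lookup (\<gamma> - Poly_Mapping.single i l) i" by (simp add: lookup_minus)
    with greater show ?thesis by (simp add: yop_pow_single xop_yop_single)
  qed
  finally show ?thesis .
qed

lemma commute_with_complement:
  "u \<in> alg_gen (UNIV - {i}) \<Longrightarrow> v \<in> alg_gen {i} \<Longrightarrow> v \<circ> u = u \<circ> v"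
  by (rule alg_gen_disjoint_commute[of "{i}" "UNIV - {i}"]) auto

lemma xop_local: "xop i \<in> alg_gen {i}" and yop_local: "yop i \<in> alg_gen {i}"
  and Ekl_local: "Ekl k l i \<in> alg_gen {i}"
  by (simp_all add: alg_gen.intros Ekl_alg_gen)

definition pid_gens :: "'i \<Rightarrow> ('i, 'k::field) endo set" where
  "pid_gens i = {Ekl k l i \<circ> u | k l u. u \<in> alg_gen (UNIV - {i})}"

lemma pid_eq_span: "pid i = espan (pid_gens i)"
  unfolding pid_def pid_gens_def ..

lemma pid_gen_mem: "u \<in> alg_gen (UNIV - {i}) \<Longrightarrow> Ekl k l i \<circ> u \<in> pid i"
  unfolding pid_eq_span pid_gens_def by (rule espan.span_base) blast

lemma pid_zero: "(\<lambda>p. 0) \<in> pid i"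
  unfolding pid_eq_span by (rule espan.span_zero)

lemma pid_add: "f \<in> pid i \<Longrightarrow> g \<in> pid i \<Longrightarrow> eadd f g \<in> pid i"
  unfolding pid_eq_span by (rule espan.span_add)

lemma pid_scal: "f \<in> pid i \<Longrightarrow> escal c f \<in> pid i"
  unfolding pid_eq_span by (rule espan.span_scal)

lemma pid_klinear: "f \<in> pid i \<Longrightarrow> klinear f"
proof (unfold pid_eq_span, induction rule: espan.induct)
  case (span_base f)
  then show ?case unfolding pid_gens_def
    by (auto intro: klinear_comp alg_gen_klinear alg_gen_klinear[OF Ekl_local])
qed (simp_all add: klinearI smult_pol_conv klinear_eadd klinear_escal)

lemma espan_comp_left:
  assumes "klinear g" "\<And>f. f \<in> A \<Longrightarrow> g \<circ> f \<in> espan A" "h \<in> espan A"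
  shows "g \<circ> h \<in> espan A"
  using assms(3)
proof (induction rule: espan.induct)
  case span_zero
  then show ?case using espan.span_zero by (simp add: comp_def klinear_zero[OF assms(1)])
next
  case (span_add f h)
  have "g \<circ> eadd f h = eadd (g \<circ> f) (g \<circ> h)"
    by (rule ext) (simp add: eadd_def klinear_add[OF assms(1)])
  with span_add.IH show ?case by (metis espan.span_add)
next
  case (span_scal f c)
  have "g \<circ> escal c f = escal c (g \<circ> f)"
    by (rule ext) (simp add: escal_def klinear_smult[OF assms(1)])
  with span_scal.IH show ?case by (metis espan.span_scal)
qed (use assms(2) in blast)

lemma espan_comp_right:
  assumes "\<And>f. f \<in> A \<Longrightarrow> f \<circ> g \<in> espan A" "h \<in> espan A"
  shows "h \<circ> g \<in> espan A"
  using assms(2)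
proof (induction rule: espan.induct)
  case span_zero
  then show ?case using espan.span_zero by (simp add: comp_def)
next
  case (span_add f h)
  have "eadd f h \<circ> g = eadd (f \<circ> g) (h \<circ> g)" by (rule ext) (simp add: eadd_def)
  with span_add.IH show ?case by (metis espan.span_add)
next
  case (span_scal f c)
  have "escal c f \<circ> g = escal c (f \<circ> g)" by (rule ext) (simp add: escal_def)
  with span_scal.IH show ?case by (metis espan.span_scal)
qed (use assms(1) in blast)

lemma pid_comp_left_gen:
  fixes g h :: "('i, 'k::field) endo"
  assumes g: "g = xop i \<or> g = yop i \<or> g \<in> alg_gen (UNIV - {i})" and h: "h \<in> pid i"
  shows "g \<circ> h \<in> pid i"
  using h unfolding pid_eq_span
proof (rule espan_comp_left[rotated 2])
  show "klinear g" using g by (metis klinear_xop klinear_yop alg_gen_klinear)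
  fix f :: "('i, 'k) endo" assume "f \<in> pid_gens i"
  then obtain k l u where f: "f = Ekl k l i \<circ> u" and u: "u \<in> alg_gen (UNIV - {i})"
    unfolding pid_gens_def by blast
  consider (other) "g \<in> alg_gen (UNIV - {i})" | (x) "g = xop i" | (y) "g = yop i"
    using g by blast
  then show "g \<circ> f \<in> espan (pid_gens i)"
  proof cases
    case other
    then have "g \<circ> f = Ekl k l i \<circ> (g \<circ> u)"
      by (metis f comp_assoc commute_with_complement[OF other Ekl_local])
    then show ?thesis using pid_gen_mem[OF alg_gen.gen_comp[OF other u]] by (simp add: pid_eq_span)
  next
    case x
    then have "g \<circ> f = Ekl (Suc k) l i \<circ> u" by (simp add: f Ekl_xop_left flip: comp_assoc)
    then show ?thesis using pid_gen_mem[OF u] by (simp add: pid_eq_span)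
  next
    case y
    show ?thesis
    proof (cases k)
      case 0
      have "g \<circ> f = (yop i \<circ> Ekl 0 l i) \<circ> u" by (simp add: f y 0 comp_assoc)
      also have "\<dots> = (\<lambda>p. 0)" unfolding Ekl_yop_left_0 by (simp add: comp_def)
      finally show ?thesis using pid_zero by (simp add: pid_eq_span)
    next
      case (Suc k')
      then have "g \<circ> f = Ekl k' l i \<circ> u" by (simp add: f y Ekl_yop_left flip: comp_assoc)
      then show ?thesis using pid_gen_mem[OF u] by (simp add: pid_eq_span)
    qed
  qed
qed

lemma pid_comp_right_gen:
  fixes g h :: "('i, 'k::field) endo"
  assumes g: "g = xop i \<or> g = yop i \<or> g \<in> alg_gen (UNIV - {i})" and h: "h \<in> pid i"
  shows "h \<circ> g \<in> pid i"
  using h unfolding pid_eq_span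
proof (rule espan_comp_right[rotated])
  fix f :: "('i, 'k) endo" assume "f \<in> pid_gens i"
  then obtain k l u where f: "f = Ekl k l i \<circ> u" and u: "u \<in> alg_gen (UNIV - {i})"
    unfolding pid_gens_def by blast
  consider (other) "g \<in> alg_gen (UNIV - {i})" | (x) "g = xop i" | (y) "g = yop i"
    using g by blast
  then show "f \<circ> g \<in> espan (pid_gens i)"
  proof cases
    case other
    then show ?thesis using pid_gen_mem[OF alg_gen.gen_comp[OF u other]] by (simp add: f comp_assoc pid_eq_span)
  next
    case x
    then have fg: "f \<circ> g = (Ekl k l i \<circ> xop i) \<circ> u"
      by (metis f comp_assoc commute_with_complement[OF u xop_local])
    show ?thesis
    proof (cases l)
      case 0
      have "f \<circ> g = (\<lambda>p. 0)" unfolding fg 0 Ekl_xop_right_0 by (simp add: comp_def)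
      then show ?thesis using pid_zero by (simp add: pid_eq_span)
    next
      case (Suc l')
      then show ?thesis using pid_gen_mem[OF u] by (simp add: fg Ekl_xop_right pid_eq_span)
    qed
  next
    case y
    then have "f \<circ> g = (Ekl k l i \<circ> yop i) \<circ> u"
      by (metis f comp_assoc commute_with_complement[OF u yop_local])
    then show ?thesis using pid_gen_mem[OF u] by (simp add: Ekl_yop_right pid_eq_span)
  qed
qed

lemma Sn_generator_cases:
  "xop j = xop i \<or> xop j = yop i \<or> xop j \<in> alg_gen (UNIV - {i})"
  "yop j = xop i \<or> yop j = yop i \<or> yop j \<in> alg_gen (UNIV - {i})"
  "(\<lambda>p. smult_pol c p) = xop i \<or> (\<lambda>p. smult_pol c p) = yop i \<or> (\<lambda>p. smult_pol c p) \<in> alg_gen (UNIV - {i})"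
  by (cases "j = i"; simp add: alg_gen.intros)+

lemma pid_comp_left: "g \<in> Sn \<Longrightarrow> h \<in> pid i \<Longrightarrow> g \<circ> h \<in> pid i"
proof (induction g arbitrary: h rule: alg_gen.induct)
  case (gen_add f g)
  have "eadd f g \<circ> h = eadd (f \<circ> h) (g \<circ> h)" by (rule ext) (simp add: eadd_def)
  with gen_add show ?case by (metis pid_add)
next
  case (gen_comp f g)
  then show ?case by (simp add: comp_assoc)
qed (simp_all add: pid_comp_left_gen Sn_generator_cases)

lemma pid_comp_right: "g \<in> Sn \<Longrightarrow> h \<in> pid i \<Longrightarrow> h \<circ> g \<in> pid i"
proof (induction g arbitrary: h rule: alg_gen.induct)
  case (gen_add f g)
  have "h \<circ> eadd f g = eadd (h \<circ> f) (h \<circ> g)"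
    by (rule ext) (simp add: eadd_def klinear_add[OF pid_klinear[OF gen_add.prems]])
  with gen_add show ?case by (metis pid_add)
next
  case (gen_comp f g)
  then show ?case by (metis comp_assoc)
qed (simp_all add: pid_comp_right_gen Sn_generator_cases)

(* (1) => (2): the commutator with x_i is a derivation of S_n with values in p_i.  On the
   generators it vanishes, except for [x_i, y_i] = x_i y_i - 1 = -E_00(i). *)
lemma comm_xop_Sn:
  fixes g :: "('i, 'k::field) endo"
  shows "g \<in> Sn \<Longrightarrow> comm (xop i) g \<in> pid i"
proof (induction rule: alg_gen.induct)
  case (gen_x j)
  have "comm (xop i) (xop j) = (\<lambda>p. 0 :: ('i, 'k) pol)" by (simp add: comm_def esub_def xop_commute)
  then show ?case by (simp add: pid_zero)
next
  case (gen_y j)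
  show ?case
  proof (cases "j = i")
    case False
    then have "comm (xop i) (yop j) = (\<lambda>p. 0 :: ('i, 'k) pol)" by (simp add: comm_def esub_def xop_yop_commute)
    then show ?thesis by (simp add: pid_zero)
  next
    case True
    have "comm (xop i) (yop j) = escal (-1) (Ekl 0 0 i \<circ> (\<lambda>p. p :: ('i, 'k) pol))"
      by (rule ext) (simp add: True comm_def esub_def escal_def Ekl_def yop_xop smult_pol_neg1)
    then show ?thesis by (simp add: pid_scal pid_gen_mem alg_gen_id)
  qed
next
  case (gen_scal c)
  have "comm (xop i) (\<lambda>p. smult_pol c p) = (\<lambda>p. 0 :: ('i, 'k) pol)"
    by (rule ext) (simp add: comm_def esub_def klinear_smult[OF klinear_xop])
  then show ?case by (simp add: pid_zero)
next
  case (gen_add f g)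
  have "comm (xop i) (eadd f g) = eadd (comm (xop i) f) (comm (xop i) g)"
    by (rule ext) (simp add: comm_def esub_def eadd_def klinear_add[OF klinear_xop])
  with gen_add.IH show ?case by (simp add: pid_add)
next
  case (gen_comp f g)
  have "comm (xop i) (f \<circ> g) = eadd (comm (xop i) f \<circ> g) (f \<circ> comm (xop i) g)"
    by (rule ext) (simp add: comm_def esub_def eadd_def klinear_diff[OF alg_gen_klinear[OF gen_comp.hyps(1)]])
  with gen_comp show ?case by (metis pid_add pid_comp_left pid_comp_right)
qed

lemma pid_vanishes_eventually:
  "h \<in> pid i \<Longrightarrow> \<exists>L. \<forall>m p. L \<le> m \<longrightarrow> h ((xop i ^^ m) p) = 0"
  unfolding pid_eq_span
proof (induction rule: espan.induct)
  case (span_base f)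
  then obtain k l u where f: "f = Ekl k l i \<circ> u" and u: "u \<in> alg_gen (UNIV - {i})"
    unfolding pid_gens_def by blast
  have "xop i ^^ m \<circ> u = u \<circ> xop i ^^ m" for m
    by (rule commute_with_complement[OF u alg_gen_funpow[OF xop_local]])
  then have "f ((xop i ^^ m) p) = Ekl k l i ((xop i ^^ m) (u p))" for m p
    by (metis f comp_apply)
  then have "\<forall>m p. Suc l \<le> m \<longrightarrow> f ((xop i ^^ m) p) = 0"
    by (simp add: Ekl_vanish)
  then show ?case by blast
next
  case (span_add f g)
  then obtain L1 L2 where "\<forall>m p. L1 \<le> m \<longrightarrow> f ((xop i ^^ m) p) = 0"
    "\<forall>m p. L2 \<le> m \<longrightarrow> g ((xop i ^^ m) p) = 0" by blast
  then have "\<forall>m p. max L1 L2 \<le> m \<longrightarrow> eadd f g ((xop i ^^ m) p) = 0" by (simp add: eadd_def)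
  then show ?case by blast
next
  case (span_scal f c)
  then obtain L where "\<forall>m p. L \<le> m \<longrightarrow> f ((xop i ^^ m) p) = 0" by blast
  then have "\<forall>m p. L \<le> m \<longrightarrow> escal c f ((xop i ^^ m) p) = 0" by (simp add: escal_def smult_pol_conv)
  then show ?case by blast
qed auto

(* (3) => eventual x_i-equivariance: on monomials of large x_i-degree the perturbations
   a_i, b_i vanish, so phi commutes with x_i there. *)
lemma eventually_xop_equivariant:
  fixes \<phi> :: "('i, 'k::field) endo"
  assumes "a \<in> pid i" "b \<in> pid i" "xop i \<circ> \<phi> = eadd (\<phi> \<circ> eadd (xop i) a) b"
  shows "\<exists>L. \<forall>\<alpha>. L \<le> Poly_Mapping.lookup \<alpha> i \<longrightarrow>
     \<phi> (monom (\<alpha> + unit_exp i)) = xop i (\<phi> (monom \<alpha>))"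
proof -
  obtain La Lb where La: "\<forall>m p. La \<le> m \<longrightarrow> a ((xop i ^^ m) p) = 0"
    and Lb: "\<forall>m p. Lb \<le> m \<longrightarrow> b ((xop i ^^ m) p) = 0"
    using pid_vanishes_eventually[OF assms(1)] pid_vanishes_eventually[OF assms(2)] by blast
  have "\<phi> (monom (\<alpha> + unit_exp i)) = xop i (\<phi> (monom \<alpha>))"
    if "max La Lb \<le> Poly_Mapping.lookup \<alpha> i" for \<alpha>
  proof -
    define L where "L = max La Lb"
    have split: "\<alpha> = (\<alpha> - Poly_Mapping.single i L) + Poly_Mapping.single i L"
      using that unfolding L_def
      by (auto simp: poly_mapping_eq_iff fun_eq_iff lookup_add lookup_minus lookup_single when_def)
    define p :: "('i, 'k) pol" where "p = monom (\<alpha> - Poly_Mapping.single i L)"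
    have "monom \<alpha> = (xop i ^^ L) p" unfolding p_def xop_pow_single by (subst split) simp
    then have "a (monom \<alpha>) = 0" "b (monom \<alpha>) = 0" using La Lb unfolding L_def by simp_all
    moreover have "xop i (\<phi> (monom \<alpha>)) = \<phi> (xop i (monom \<alpha>) + a (monom \<alpha>)) + b (monom \<alpha>)"
      using fun_cong[OF assms(3), of "monom \<alpha>"] by (simp add: eadd_def)
    ultimately show ?thesis by (simp add: xop_single)
  qed
  then show ?thesis by blast
qed

definition trunc_exp :: "nat \<Rightarrow> ('i \<Rightarrow>\<^sub>0 nat) \<Rightarrow> 'i \<Rightarrow>\<^sub>0 nat" where
  "trunc_exp N \<alpha> = Abs_poly_mapping (\<lambda>i. min (Poly_Mapping.lookup \<alpha> i) N)"

lemma lookup_trunc_exp: "Poly_Mapping.lookup (trunc_exp N \<alpha>) i = min (Poly_Mapping.lookup \<alpha> i) N"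
proof -
  have "finite {i. min (Poly_Mapping.lookup \<alpha> i) N \<noteq> 0}"
    by (rule finite_subset[OF _ finite_keys[of \<alpha>]]) (auto simp: in_keys_iff)
  then show ?thesis unfolding trunc_exp_def by simp
qed

lemma monom_shift:
  fixes \<phi> :: "('i::finite, 'k::field) endo"
  assumes equivariant: "\<And>i \<alpha>. N \<le> Poly_Mapping.lookup \<alpha> i \<Longrightarrow>
       \<phi> (monom (\<alpha> + unit_exp i)) = xop i (\<phi> (monom \<alpha>))"
    and high: "\<forall>i. 0 < Poly_Mapping.lookup \<delta> i \<longrightarrow> N \<le> Poly_Mapping.lookup \<gamma> i"
  shows "\<phi> (monom (\<gamma> + \<delta>)) = monom \<delta> * \<phi> (monom \<gamma>)"
  using high
proof (induction \<delta> rule: exponent_induct)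
  case (step \<delta> i)
  then have "\<forall>j. 0 < Poly_Mapping.lookup \<delta> j \<longrightarrow> N \<le> Poly_Mapping.lookup \<gamma> j"
    by (simp add: lookup_add)
  moreover have "N \<le> Poly_Mapping.lookup (\<gamma> + \<delta>) i"
    using spec[OF step.prems, of i] by (simp add: lookup_add)
  then have "\<phi> (monom ((\<gamma> + \<delta>) + unit_exp i)) = xop i (\<phi> (monom (\<gamma> + \<delta>)))"
    by (rule equivariant)
  ultimately have "\<phi> (monom ((\<gamma> + \<delta>) + unit_exp i)) = xop i (monom \<delta> * \<phi> (monom \<gamma>))"
    using step.IH by simp
  then show ?case by (simp add: xop_def mult.assoc[symmetric] mult_single add_ac)
qed simp

lemma monom_factor_trunc:
  fixes \<phi> :: "('i::finite, 'k::field) endo"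
  assumes "\<And>i \<alpha>. N \<le> Poly_Mapping.lookup \<alpha> i \<Longrightarrow>
       \<phi> (monom (\<alpha> + unit_exp i)) = xop i (\<phi> (monom \<alpha>))"
  shows "\<phi> (monom \<alpha>) = monom (\<alpha> - trunc_exp N \<alpha>) * \<phi> (monom (trunc_exp N \<alpha>))"
proof -
  have "trunc_exp N \<alpha> + (\<alpha> - trunc_exp N \<alpha>) = \<alpha>"
    by (rule poly_mapping_eqI) (simp add: lookup_add lookup_minus lookup_trunc_exp)
  moreover have "\<forall>i. 0 < Poly_Mapping.lookup (\<alpha> - trunc_exp N \<alpha>) i \<longrightarrow> N \<le> Poly_Mapping.lookup (trunc_exp N \<alpha>) i"
    by (simp add: lookup_minus lookup_trunc_exp)
  ultimately show ?thesis using monom_shift[OF assms] by metis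
qed

definition level_cut :: "nat \<Rightarrow> 'i \<Rightarrow> nat \<Rightarrow> ('i, 'k::field) endo" where
  "level_cut N i l = (if l < N then Ekl 0 l i else yop i ^^ N)"

lemma level_cut_Sn: "level_cut N i l \<in> Sn"
  unfolding level_cut_def by (simp add: Ekl_alg_gen alg_gen_funpow alg_gen.gen_y)

lemma level_cut_single:
  assumes "l \<le> N"
  shows "level_cut N i l (monom \<gamma>) =
    (if min (Poly_Mapping.lookup \<gamma> i) N = l then monom (\<gamma> - Poly_Mapping.single i l) else 0)"
  using assms by (auto simp: level_cut_def Ekl_0_single yop_pow_single min_def)

lemma level_projection_on:
  assumes "finite I" "Poly_Mapping.keys \<beta> \<subseteq> I" "\<forall>i. Poly_Mapping.lookup \<beta> i \<le> N"
  shows "\<exists>T \<in> (Sn :: ('i, 'k::field) endo set). \<forall>\<alpha>. T (monom \<alpha>) =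
    (if \<forall>i\<in>I. min (Poly_Mapping.lookup \<alpha> i) N = Poly_Mapping.lookup \<beta> i then monom (\<alpha> - \<beta>) else 0)"
  using assms
proof (induction I arbitrary: \<beta> rule: finite_induct)
  case empty
  then have "\<beta> = 0" by (simp add: poly_mapping_eq_iff fun_eq_iff in_keys_iff)
  then show ?case using alg_gen_id by fastforce
next
  case (insert i I)
  define \<beta>' where "\<beta>' = \<beta> - Poly_Mapping.single i (Poly_Mapping.lookup \<beta> i)"
  have lookup_\<beta>': "Poly_Mapping.lookup \<beta>' j = (if j = i then 0 else Poly_Mapping.lookup \<beta> j)" for j
    by (simp add: \<beta>'_def lookup_minus lookup_single when_def)
  have "Poly_Mapping.keys \<beta>' \<subseteq> I"
  proof
    fix j assume "j \<in> Poly_Mapping.keys \<beta>'"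
    then have "j \<noteq> i" "j \<in> Poly_Mapping.keys \<beta>" by (simp_all add: in_keys_iff lookup_\<beta>' split: if_splits)
    then show "j \<in> I" using insert.prems(1) by blast
  qed
  moreover have "\<forall>j. Poly_Mapping.lookup \<beta>' j \<le> N"
    using insert.prems(2) by (simp add: lookup_\<beta>')
  ultimately obtain T :: "('i, 'k) endo" where T: "T \<in> Sn" "\<forall>\<alpha>. T (monom \<alpha>) =
    (if \<forall>j\<in>I. min (Poly_Mapping.lookup \<alpha> j) N = Poly_Mapping.lookup \<beta>' j then monom (\<alpha> - \<beta>') else 0)"
    using insert.IH by blast
  define t :: "('i, 'k) endo" where "t = level_cut N i (Poly_Mapping.lookup \<beta> i)"
  have "(t \<circ> T) (monom \<alpha>) =
    (if \<forall>j\<in>insert i I. min (Poly_Mapping.lookup \<alpha> j) N = Poly_Mapping.lookup \<beta> j then monom (\<alpha> - \<beta>) else 0)"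
    for \<alpha>
  proof -
    have same_on_I: "(\<forall>j\<in>I. min (Poly_Mapping.lookup \<alpha> j) N = Poly_Mapping.lookup \<beta>' j) \<longleftrightarrow>
        (\<forall>j\<in>I. min (Poly_Mapping.lookup \<alpha> j) N = Poly_Mapping.lookup \<beta> j)"
      using insert.hyps(2) by (auto simp: lookup_\<beta>')
    show ?thesis
    proof (cases "\<forall>j\<in>I. min (Poly_Mapping.lookup \<alpha> j) N = Poly_Mapping.lookup \<beta> j")
      case True
      then have "T (monom \<alpha>) = monom (\<alpha> - \<beta>')" using T(2) same_on_I by simp
      moreover have "Poly_Mapping.lookup (\<alpha> - \<beta>') i = Poly_Mapping.lookup \<alpha> i"
        by (simp add: lookup_minus lookup_\<beta>')
      moreover have "\<alpha> - \<beta>' - Poly_Mapping.single i (Poly_Mapping.lookup \<beta> i) = \<alpha> - \<beta>"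
        by (auto simp: poly_mapping_eq_iff fun_eq_iff lookup_minus lookup_single when_def lookup_\<beta>')
      ultimately show ?thesis
        using True insert.prems(2) by (simp add: t_def level_cut_single)
    next
      case False
      then have "\<not> (\<forall>j\<in>I. min (Poly_Mapping.lookup \<alpha> j) N = Poly_Mapping.lookup \<beta>' j)"
        using same_on_I by simp
      then have "T (monom \<alpha>) = 0" using T(2) by auto
      with False show ?thesis
        by (auto simp: t_def klinear_zero[OF alg_gen_klinear[OF level_cut_Sn]])
    qed
  qed
  moreover have "t \<circ> T \<in> Sn" by (simp add: t_def alg_gen.gen_comp level_cut_Sn T(1))
  ultimately show ?case by blast
qed

lemma level_projection:
  assumes "\<forall>i. Poly_Mapping.lookup \<beta> i \<le> N"
  shows "\<exists>T \<in> (Sn :: ('i::finite, 'k::field) endo set). \<forall>\<alpha>.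
    T (monom \<alpha>) = (if trunc_exp N \<alpha> = \<beta> then monom (\<alpha> - \<beta>) else 0)"
proof -
  have "(\<forall>i. min (Poly_Mapping.lookup \<alpha> i) N = Poly_Mapping.lookup \<beta> i) \<longleftrightarrow> trunc_exp N \<alpha> = \<beta>" for \<alpha>
    by (auto simp: poly_mapping_eq_iff fun_eq_iff lookup_trunc_exp)
  then show ?thesis using level_projection_on[OF finite_UNIV _ assms] by simp
qed

lemma Sn_of_eventually_equivariant:
  fixes \<phi> :: "('i::finite, 'k::field) endo"
  assumes lin: "klinear \<phi>"
    and equivariant: "\<And>i \<alpha>. N \<le> Poly_Mapping.lookup \<alpha> i \<Longrightarrow>
       \<phi> (monom (\<alpha> + unit_exp i)) = xop i (\<phi> (monom \<alpha>))"
  shows "\<phi> \<in> Sn"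
proof -
  define B where "B = {\<beta> :: 'i \<Rightarrow>\<^sub>0 nat. \<forall>i. Poly_Mapping.lookup \<beta> i \<le> N}"
  have finite_B: "finite B" unfolding B_def by (rule finite_bounded_exponents)
  have trunc_in_B: "trunc_exp N \<alpha> \<in> B" for \<alpha> by (simp add: B_def lookup_trunc_exp)
  have "\<forall>\<beta>\<in>B. \<exists>T. T \<in> (Sn :: ('i, 'k) endo set) \<and> (\<forall>\<alpha>.
      T (monom \<alpha>) = (if trunc_exp N \<alpha> = \<beta> then monom (\<alpha> - \<beta>) else 0))"
  proof
    fix \<beta> assume "\<beta> \<in> B"
    then have "\<forall>i. Poly_Mapping.lookup \<beta> i \<le> N" by (simp add: B_def)
    from level_projection[OF this] show "\<exists>T. T \<in> (Sn :: ('i, 'k) endo set) \<and> (\<forall>\<alpha>.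
      T (monom \<alpha>) = (if trunc_exp N \<alpha> = \<beta> then monom (\<alpha> - \<beta>) else 0))"
      unfolding Bex_def .
  qed
  from bchoice[OF this] obtain T :: "('i \<Rightarrow>\<^sub>0 nat) \<Rightarrow> ('i, 'k) endo" where T: "\<forall>\<beta>\<in>B. T \<beta> \<in> Sn \<and>
      (\<forall>\<alpha>. T \<beta> (monom \<alpha>) = (if trunc_exp N \<alpha> = \<beta> then monom (\<alpha> - \<beta>) else 0))"
    by blast
  then have T_Sn: "\<And>\<beta>. \<beta> \<in> B \<Longrightarrow> T \<beta> \<in> Sn"
    and T_monom: "\<And>\<beta> \<alpha>. \<beta> \<in> B \<Longrightarrow> T \<beta> (monom \<alpha>) = (if trunc_exp N \<alpha> = \<beta> then monom (\<alpha> - \<beta>) else 0)"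
    by simp_all
  define R where "R = (\<lambda>p. \<Sum>\<beta>\<in>B. ((\<lambda>q. \<phi> (monom \<beta>) * q) \<circ> T \<beta>) p)"
  have R_Sn: "R \<in> Sn"
    unfolding R_def by (intro alg_gen_sum finite_B alg_gen.gen_comp mult_Sn T_Sn)
  have "\<phi> = R"
  proof (rule klinear_eq_on_monoms[OF lin alg_gen_klinear[OF R_Sn]])
    fix \<alpha>
    have "R (monom \<alpha>) = (\<Sum>\<beta>\<in>B. if trunc_exp N \<alpha> = \<beta> then \<phi> (monom \<beta>) * monom (\<alpha> - \<beta>) else 0)"
      unfolding R_def by (intro sum.cong refl) (simp add: T_monom)
    also have "\<dots> = \<phi> (monom (trunc_exp N \<alpha>)) * monom (\<alpha> - trunc_exp N \<alpha>)"
      using finite_B trunc_in_B by simp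
    also have "\<dots> = \<phi> (monom \<alpha>)"
      using monom_factor_trunc[OF equivariant, where \<alpha> = \<alpha>] by (simp add: mult.commute)
    finally show "\<phi> (monom \<alpha>) = R (monom \<alpha>)" ..
  qed
  with R_Sn show ?thesis by simp
qed

(* (3) => (1): the perturbed commutation relations give eventual x_i-equivariance for each
   i, with a threshold that can be taken uniform since there are finitely many variables. *)
lemma Sn_of_perturbed_commutation:
  fixes \<phi> :: "('i::finite, 'k::field) endo"
  assumes lin: "klinear \<phi>"
    and perturbed: "\<forall>i. \<exists>a\<in>pid i. \<exists>b\<in>pid i. xop i \<circ> \<phi> = eadd (\<phi> \<circ> eadd (xop i) a) b"
  shows "\<phi> \<in> Sn"
proof -
  have "\<forall>i. \<exists>L. \<forall>\<alpha>. L \<le> Poly_Mapping.lookup \<alpha> i \<longrightarrow>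
      \<phi> (monom (\<alpha> + unit_exp i)) = xop i (\<phi> (monom \<alpha>))"
  proof
    fix i
    from perturbed obtain a b where "a \<in> pid i" "b \<in> pid i" "xop i \<circ> \<phi> = eadd (\<phi> \<circ> eadd (xop i) a) b"
      by blast
    then show "\<exists>L. \<forall>\<alpha>. L \<le> Poly_Mapping.lookup \<alpha> i \<longrightarrow> \<phi> (monom (\<alpha> + unit_exp i)) = xop i (\<phi> (monom \<alpha>))"
      by (rule eventually_xop_equivariant)
  qed
  then obtain L where "\<forall>i \<alpha>. L i \<le> Poly_Mapping.lookup \<alpha> i \<longrightarrow>
      \<phi> (monom (\<alpha> + unit_exp i)) = xop i (\<phi> (monom \<alpha>))"
    by (metis choice)
  then have L: "\<And>i \<alpha>. L i \<le> Poly_Mapping.lookup \<alpha> i \<Longrightarrow>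
      \<phi> (monom (\<alpha> + unit_exp i)) = xop i (\<phi> (monom \<alpha>))"
    by blast
  have L_le_Max: "L i \<le> Max (range L)" for i :: 'i by (rule Max_ge) auto
  show ?thesis
  proof (rule Sn_of_eventually_equivariant[OF lin])
    fix i :: 'i and \<alpha> :: "'i \<Rightarrow>\<^sub>0 nat" assume "Max (range L) \<le> Poly_Mapping.lookup \<alpha> i"
    then have "L i \<le> Poly_Mapping.lookup \<alpha> i" using L_le_Max le_trans by blast
    then show "\<phi> (monom (\<alpha> + unit_exp i)) = xop i (\<phi> (monom \<alpha>))" by (rule L)
  qed
qed

theorem theorem6p2:
  fixes \<phi> :: "('i::finite, 'k::field_char_0) endo"
  assumes "klinear \<phi>"
  shows "(\<phi> \<in> Sn \<longleftrightarrow> (\<forall>i. comm (xop i) \<phi> \<in> pid i))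
       \<and> ((\<forall>i. comm (xop i) \<phi> \<in> pid i) \<longleftrightarrow>
          (\<forall>i. \<exists>a\<in>pid i. \<exists>b\<in>pid i. xop i \<circ> \<phi> = eadd (\<phi> \<circ> eadd (xop i) a) b))"
proof -
  have one_two: "\<phi> \<in> Sn \<Longrightarrow> \<forall>i. comm (xop i) \<phi> \<in> pid i"
    by (simp add: comm_xop_Sn)
  have two_three: "\<forall>i. \<exists>a\<in>pid i. \<exists>b\<in>pid i. xop i \<circ> \<phi> = eadd (\<phi> \<circ> eadd (xop i) a) b"
    if commutators: "\<forall>i. comm (xop i) \<phi> \<in> pid i"
  proof (intro allI bexI)
    fix i
    show "xop i \<circ> \<phi> = eadd (\<phi> \<circ> eadd (xop i) (\<lambda>p. 0)) (comm (xop i) \<phi>)"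
      by (rule ext) (simp add: eadd_def comm_def esub_def)
  qed (simp_all add: pid_zero commutators)
  have three_one: "\<phi> \<in> Sn"
    if "\<forall>i. \<exists>a\<in>pid i. \<exists>b\<in>pid i. xop i \<circ> \<phi> = eadd (\<phi> \<circ> eadd (xop i) a) b"
    using Sn_of_perturbed_commutation[OF assms that] .
  show ?thesis using one_two two_three three_one by argo
qed

end
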